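(* Suppose $m$, $n$ are positive integers. Then \[ \sum_{k = 1}^{m} (-1)^{k-1} \binom{m}{k} \frac{1}{k^{n}} = \frac{1}{n!} \sum_{\{A_{1},\dotsc,A_{j}\} \in \Pi(n)} a_{|A_{1}|} \cdots a_{|A_{j}|}, \] where $a_{i} = (i-1)!\, H^{(i)}_{m}$ for each positive integer $i$.
   Context: $\Pi(n)$ is the set of all set partitions of $\{1,\dots,n\}$ into nonempty blocks $A_1,\dots,A_j$ (with $j$ varying), and $|A|$ is the cardinality of $A$. $H^{(i)}_m=\sum_{k=1}^m k^{-i}$ is the generalized harmonic number. *)

theory Defs
  imports Complex_Main "HOL-Library.Disjoint_Sets"
begin

definition gen_harm :: "nat \<Rightarrow> nat \<Rightarrow> real" where
  "gen_harm i m = (\<Sum>k=1..m. 1 / (real k ^ i))"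

definition set_partitions :: "nat \<Rightarrow> nat set set set" where
  "set_partitions n = {P. partition_on {1..n} P}"

end

theory Submission
  imports Defs "HOL-Computational_Algebra.Formal_Power_Series"
begin

(* Both sides equal h_n(1, 1/2, ..., 1/m), the coefficient of x^n in the product of the
   geometric series 1/(1 - x/i) for i = 1..m. For the alternating binomial sum this holds
   because both satisfy the same Pascal-type recurrence in m and n. For the partition sum,
   removing the block that contains a fixed element gives a recurrence, which for the
   weights a_i = (i-1)! H^(i)_m becomes n! times Newton's identity
   (n+1) h_(n+1) = sum_j H^(j+1)_m h_(n-j), read off from the logarithmic derivative of the
   product. *)

unbundle fps_syntax

lemma sum_Pow_card:
  fixes f :: "nat \<Rightarrow> 'a::comm_semiring_1"
  assumes "finite S"
  shows "(\<Sum>B\<in>Pow S. f (card B)) = (\<Sum>j\<le>card S. of_nat (card S choose j) * f j)"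
proof -
  have "(\<Sum>B\<in>Pow S. f (card B)) = (\<Sum>j\<le>card S. \<Sum>B | B \<in> Pow S \<and> card B = j. f (card B))"
    by (rule sum.group[symmetric]) (auto simp: assms card_mono)
  also have "\<dots> = (\<Sum>j\<le>card S. of_nat (card S choose j) * f j)"
  proof (rule sum.cong[OF refl])
    fix j
    have "(\<Sum>B | B \<in> Pow S \<and> card B = j. f (card B)) = (\<Sum>B | B \<subseteq> S \<and> card B = j. f j)"
      by (rule sum.cong) auto
    then show "(\<Sum>B | B \<in> Pow S \<and> card B = j. f (card B)) = of_nat (card S choose j) * f j"
      by (simp add: n_subsets[OF assms])
  qed
  finally show ?thesis .
qed

lemma partition_on_insert_block:
  assumes "x \<notin> S" "B \<subseteq> S" "partition_on (S - B) Q"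
  shows "partition_on (insert x S) (insert (insert x B) Q)"
proof -
  have "\<Union>Q = S - B" using partition_onD1[OF assms(3)] by simp
  then have "disjnt (insert x B) (\<Union>Q)" using assms(1) by (auto simp: disjnt_def)
  moreover have "insert x S - insert x B = S - B" using assms(1) by auto
  ultimately show ?thesis using assms by (auto simp: partition_on_insert)
qed

lemma partition_on_split_block:
  assumes P: "partition_on (insert x S) P" and "x \<notin> S"
  obtains B Q where "B \<subseteq> S" "partition_on (S - B) Q" "P = insert (insert x B) Q"
proof -
  obtain p where p: "p \<in> P" "x \<in> p" using partition_onD1[OF P] by auto
  have "disjnt p (\<Union>(P - {p}))"
    using partition_onD2[OF P] p by (auto simp: disjoint_def disjnt_def)
  then have "partition_on (insert x S - p) (P - {p})" "p \<subseteq> insert x S"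
    using partition_on_insert[of p "P - {p}" "insert x S"] P p by (auto simp: insert_absorb)
  moreover have "insert x S - p = S - (p - {x})" using p \<open>x \<notin> S\<close> by auto
  ultimately show ?thesis
    using that[of "p - {x}" "P - {p}"] p by (auto simp: insert_absorb)
qed

lemma insert_block_inject:
  assumes "x \<notin> \<Union>Q" "x \<notin> \<Union>Q'" "x \<notin> B" "x \<notin> B'"
    and "insert (insert x B) Q = insert (insert x B') Q'"
  shows "B = B' \<and> Q = Q'"
proof -
  have new: "insert x B \<notin> Q'" "insert x B \<notin> Q" "insert x B' \<notin> Q'" using assms(1,2) by auto
  then have block: "insert x B = insert x B'" using assms(5) by blast
  then have "B = B'" using assms(3,4) by (metis insert_ident)
  moreover have "Q = Q'" using assms(5) new block by (metis insert_ident)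
  ultimately show ?thesis ..
qed

lemma bij_betw_insert_block:
  assumes "x \<notin> S"
  shows "bij_betw (\<lambda>(B, Q). insert (insert x B) Q)
           (SIGMA B:Pow S. {Q. partition_on (S - B) Q}) {P. partition_on (insert x S) P}"
proof (rule bij_betw_imageI)
  show "inj_on (\<lambda>(B, Q). insert (insert x B) Q) (SIGMA B:Pow S. {Q. partition_on (S - B) Q})"
  proof (rule inj_onI, clarsimp)
    fix B Q B' Q'
    assume "B \<subseteq> S" "B' \<subseteq> S" "partition_on (S - B) Q" "partition_on (S - B') Q'"
      and "insert (insert x B) Q = insert (insert x B') Q'"
    then show "B = B' \<and> Q = Q'"
      using assms by (intro insert_block_inject) (auto dest!: partition_onD1)
  qed
  show "(\<lambda>(B, Q). insert (insert x B) Q) ` (SIGMA B:Pow S. {Q. partition_on (S - B) Q})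
      = {P. partition_on (insert x S) P}"
    using assms by (auto intro: partition_on_insert_block elim!: partition_on_split_block)
qed

lemma sum_partition_on_insert:
  fixes a :: "nat \<Rightarrow> 'a::comm_semiring_1"
  assumes "finite S" "x \<notin> S"
  shows "(\<Sum>P | partition_on (insert x S) P. \<Prod>A\<in>P. a (card A))
       = (\<Sum>B\<in>Pow S. a (Suc (card B)) * (\<Sum>Q | partition_on (S - B) Q. \<Prod>A\<in>Q. a (card A)))"
proof -
  have block: "(\<Prod>A\<in>insert (insert x B) Q. a (card A)) = a (Suc (card B)) * (\<Prod>A\<in>Q. a (card A))"
    if "B \<subseteq> S" "partition_on (S - B) Q" for B Q
  proof -
    have "finite Q" using assms(1) that(2) by (meson finite_Diff finite_elements)
    moreover have "insert x B \<notin> Q" using assms(2) partition_onD1[OF that(2)] by auto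
    moreover have "finite B" "x \<notin> B" using that assms finite_subset by auto
    ultimately show ?thesis by simp
  qed
  have "(\<Sum>P | partition_on (insert x S) P. \<Prod>A\<in>P. a (card A))
      = (\<Sum>(B, Q)\<in>(SIGMA B:Pow S. {Q. partition_on (S - B) Q}). \<Prod>A\<in>insert (insert x B) Q. a (card A))"
    by (subst sum.reindex_bij_betw[OF bij_betw_insert_block[OF assms(2)], symmetric])
      (simp add: case_prod_unfold)
  also have "\<dots> = (\<Sum>(B, Q)\<in>(SIGMA B:Pow S. {Q. partition_on (S - B) Q}).
                      a (Suc (card B)) * (\<Prod>A\<in>Q. a (card A)))"
    by (rule sum.cong) (auto simp: block)
  also have "\<dots> = (\<Sum>B\<in>Pow S. a (Suc (card B)) * (\<Sum>Q | partition_on (S - B) Q. \<Prod>A\<in>Q. a (card A)))"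
    by (simp add: sum.Sigma[symmetric] assms(1) finitely_many_partition_on sum_distrib_left)
  finally show ?thesis .
qed

lemma sum_partition_on_prod_eq:
  fixes a b :: "nat \<Rightarrow> 'a::comm_semiring_1"
  assumes "b 0 = 1"
    and "\<And>n. b (Suc n) = (\<Sum>j\<le>n. of_nat (n choose j) * a (Suc j) * b (n - j))"
    and "finite S"
  shows "(\<Sum>P | partition_on S P. \<Prod>A\<in>P. a (card A)) = b (card S)"
  using assms(3)
proof (induction "card S" arbitrary: S rule: less_induct)
  case less
  show ?case
  proof (cases "S = {}")
    case True
    then have "{P. partition_on S P} = {{}}" by (auto simp: partition_on_empty)
    then show ?thesis using True by (simp add: assms(1))
  next
    case False
    then obtain x S' where S: "S = insert x S'" "x \<notin> S'" by (metis Set.set_insert ex_in_conv)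
    have "finite S'" using less.prems S by simp
    have IH: "(\<Sum>Q | partition_on (S' - B) Q. \<Prod>A\<in>Q. a (card A)) = b (card S' - card B)"
      if "B \<subseteq> S'" for B
      using less.hyps[of "S' - B"] that \<open>finite S'\<close> S
      by (simp add: card_Diff_subset finite_subset le_imp_less_Suc)
    have "(\<Sum>P | partition_on S P. \<Prod>A\<in>P. a (card A))
        = (\<Sum>B\<in>Pow S'. a (Suc (card B)) * b (card S' - card B))"
      unfolding S(1) sum_partition_on_insert[OF \<open>finite S'\<close> S(2)] by (intro sum.cong) (auto simp: IH)
    also have "\<dots> = b (card S)"
      using S \<open>finite S'\<close> sum_Pow_card[OF \<open>finite S'\<close>, of "\<lambda>j. a (Suc j) * b (card S' - j)"]
      by (simp add: assms(2) mult.assoc)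
    finally show ?thesis .
  qed
qed

definition geometric_fps :: "'a::comm_ring_1 \<Rightarrow> 'a fps" where
  "geometric_fps c = Abs_fps (\<lambda>j. c ^ j)"

definition complete_hom_fps :: "(nat \<Rightarrow> 'a::comm_ring_1) \<Rightarrow> nat \<Rightarrow> 'a fps" where
  "complete_hom_fps c m = (\<Prod>i=1..m. geometric_fps (c i))"

lemma geometric_fps_unfold: "geometric_fps c = 1 + fps_const c * fps_X * geometric_fps c"
proof (rule fps_ext)
  fix n
  show "geometric_fps c $ n = (1 + fps_const c * fps_X * geometric_fps c) $ n"
    by (cases n) (simp_all add: geometric_fps_def mult.assoc)
qed

lemma fps_deriv_geometric_fps:
  "fps_deriv (geometric_fps c) = fps_const c * geometric_fps c * geometric_fps c"
proof (rule fps_ext)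
  fix n
  have "(geometric_fps c * geometric_fps c) $ n = of_nat (Suc n) * c ^ n"
    by (simp add: fps_mult_nth geometric_fps_def power_add[symmetric])
  then show "fps_deriv (geometric_fps c) $ n = (fps_const c * geometric_fps c * geometric_fps c) $ n"
    by (simp add: mult.assoc geometric_fps_def mult_ac)
qed

lemma complete_hom_fps_0 [simp]: "complete_hom_fps c 0 = 1"
  by (simp add: complete_hom_fps_def)

lemma complete_hom_fps_Suc:
  "complete_hom_fps c (Suc m) = complete_hom_fps c m * geometric_fps (c (Suc m))"
  by (simp add: complete_hom_fps_def prod.cl_ivl_Suc mult.commute)

lemma complete_hom_fps_nth_0 [simp]: "complete_hom_fps c m $ 0 = 1"
  by (induction m) (simp_all add: complete_hom_fps_Suc geometric_fps_def)

lemma complete_hom_fps_nth_Suc_Suc: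
  "complete_hom_fps c (Suc m) $ Suc n
     = complete_hom_fps c m $ Suc n + c (Suc m) * complete_hom_fps c (Suc m) $ n"
proof -
  have "complete_hom_fps c (Suc m)
      = complete_hom_fps c m * (1 + fps_const (c (Suc m)) * fps_X * geometric_fps (c (Suc m)))"
    by (metis complete_hom_fps_Suc geometric_fps_unfold)
  also have "\<dots> = complete_hom_fps c m + fps_const (c (Suc m)) * (fps_X * complete_hom_fps c (Suc m))"
    by (simp add: complete_hom_fps_Suc algebra_simps)
  finally have "complete_hom_fps c (Suc m) $ Suc n
      = (complete_hom_fps c m + fps_const (c (Suc m)) * (fps_X * complete_hom_fps c (Suc m))) $ Suc n"
    by (rule arg_cong)
  then show ?thesis
    by simp
qed

lemma fps_deriv_complete_hom_fps:
  "fps_deriv (complete_hom_fps c m) = Abs_fps (\<lambda>j. \<Sum>i=1..m. c i ^ Suc j) * complete_hom_fps c m"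
proof (induction m)
  case 0
  then show ?case by (simp add: fps_zero_def)
next
  case (Suc m)
  have "Abs_fps (\<lambda>j. \<Sum>i=1..Suc m. c i ^ Suc j)
      = Abs_fps (\<lambda>j. \<Sum>i=1..m. c i ^ Suc j) + fps_const (c (Suc m)) * geometric_fps (c (Suc m))"
    by (rule fps_ext) (simp add: geometric_fps_def)
  then show ?case
    by (simp add: complete_hom_fps_Suc Suc fps_deriv_geometric_fps algebra_simps)
qed

lemma complete_hom_fps_newton:
  "of_nat (Suc n) * complete_hom_fps c m $ Suc n
     = (\<Sum>j\<le>n. (\<Sum>i=1..m. c i ^ Suc j) * complete_hom_fps c m $ (n - j))"
  using arg_cong[OF fps_deriv_complete_hom_fps, of "\<lambda>f. f $ n" c m]
  by (simp add: fps_mult_nth atLeast0AtMost del: of_nat_Suc)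

lemma fact_complete_hom_fps_recurrence:
  "fact (Suc n) * complete_hom_fps c m $ Suc n
     = (\<Sum>j\<le>n. of_nat (n choose j) * (fact j * (\<Sum>i=1..m. c i ^ Suc j))
                 * (fact (n - j) * complete_hom_fps c m $ (n - j)))"
proof -
  have scale: "of_nat (n choose j) * (fact j * p) * (fact (n - j) * h) = fact n * (p * h)"
    if "j \<le> n" for j and p h :: 'a
  proof -
    have "of_nat (n choose j) * fact j * fact (n - j) = (fact n :: 'a)"
      using arg_cong[OF binomial_fact_lemma[OF that], of "of_nat :: nat \<Rightarrow> 'a"]
      by (simp add: mult_ac)
    then show ?thesis by (simp add: mult_ac)
  qed
  have "(\<Sum>j\<le>n. of_nat (n choose j) * (fact j * (\<Sum>i=1..m. c i ^ Suc j))
                 * (fact (n - j) * complete_hom_fps c m $ (n - j)))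
      = fact n * (\<Sum>j\<le>n. (\<Sum>i=1..m. c i ^ Suc j) * complete_hom_fps c m $ (n - j))"
    unfolding sum_distrib_left[where r = "fact n"] by (rule sum.cong[OF refl]) (simp add: scale)
  also have "\<dots> = fact n * (of_nat (Suc n) * complete_hom_fps c m $ Suc n)"
    by (simp only: complete_hom_fps_newton)
  also have "\<dots> = fact (Suc n) * complete_hom_fps c m $ Suc n"
    by (simp only: fact_Suc mult_ac)
  finally show ?thesis ..
qed

definition alt_binomial_sum :: "nat \<Rightarrow> nat \<Rightarrow> real" where
  "alt_binomial_sum m n = (\<Sum>k=1..m. (-1) ^ (k - 1) * real (m choose k) / real k ^ n)"

lemma alt_binomial_sum_0_right: "m > 0 \<Longrightarrow> alt_binomial_sum m 0 = 1"
proof -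
  assume "m > 0"
  have "0 = (\<Sum>k\<le>m. (-1) ^ k * real (m choose k))"
    using choose_alternating_sum[OF \<open>m > 0\<close>] by simp
  also have "\<dots> = 1 - alt_binomial_sum m 0"
    by (simp add: alt_binomial_sum_def atMost_atLeast0 sum.atLeast_Suc_atMost
        sum_negf[symmetric] power_eq_if)
  finally show ?thesis by simp
qed

lemma alt_binomial_sum_Suc_Suc:
  "alt_binomial_sum (Suc m) (Suc n) = alt_binomial_sum m (Suc n) + alt_binomial_sum (Suc m) n / real (Suc m)"
proof -
  have summand: "real (Suc m choose k) / real k ^ Suc n
      = real (m choose k) / real k ^ Suc n + real (Suc m choose k) / real k ^ n / real (Suc m)"
    if k_range: "k \<in> {1..Suc m}" for k
  proof -
    obtain j where k: "k = Suc j" using k_range by (cases k) auto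
    have pascal: "real (Suc m choose k) = real (m choose k) + real (m choose j)"
      using k by simp
    have absorb: "real (Suc m choose k) / real (Suc m) = real (m choose j) / real k"
      using Suc_times_binomial[of j m] k by (simp add: field_simps flip: of_nat_mult)
    have "real (Suc m choose k) / real k ^ Suc n
        = real (m choose k) / real k ^ Suc n + real (m choose j) / real k / real k ^ n"
      unfolding pascal power_Suc by (simp add: add_divide_distrib divide_divide_eq_left)
    also have "\<dots> = real (m choose k) / real k ^ Suc n + real (Suc m choose k) / real (Suc m) / real k ^ n"
      by (simp only: absorb)
    finally show ?thesis
      by (simp add: divide_divide_eq_left mult.commute)
  qed
  have "alt_binomial_sum (Suc m) (Suc n)
      = (\<Sum>k=1..Suc m. (-1) ^ (k - 1) * (real (Suc m choose k) / real k ^ Suc n))"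
    by (simp add: alt_binomial_sum_def)
  also have "\<dots> = (\<Sum>k=1..Suc m. (-1) ^ (k - 1) * (real (m choose k) / real k ^ Suc n)
      + (-1) ^ (k - 1) * (real (Suc m choose k) / real k ^ n / real (Suc m)))"
    by (intro sum.cong refl) (simp only: summand distrib_left)
  also have "\<dots> = alt_binomial_sum m (Suc n) + alt_binomial_sum (Suc m) n / real (Suc m)"
    by (simp add: alt_binomial_sum_def sum.distrib sum_divide_distrib sum.cl_ivl_Suc
        add_divide_distrib binomial_eq_0)
  finally show ?thesis .
qed

lemma alt_binomial_sum_eq_complete_hom:
  "m > 0 \<or> n > 0 \<Longrightarrow> alt_binomial_sum m n = complete_hom_fps (\<lambda>i. 1 / real i) m $ n"
proof (induction m arbitrary: n)
  case 0
  then show ?case by (simp add: alt_binomial_sum_def)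
next
  case (Suc m)
  note IH_m = Suc.IH
  show ?case
  proof (induction n)
    case 0
    then show ?case by (simp add: alt_binomial_sum_0_right)
  next
    case (Suc n)
    then show ?case
      using IH_m[of "Suc n"] by (simp add: alt_binomial_sum_Suc_Suc complete_hom_fps_nth_Suc_Suc)
  qed
qed

theorem theorem3:
  fixes m n :: nat
  assumes "m > 0" and "n > 0"
  shows "(\<Sum>k=1..m. (-1) ^ (k - 1) * real (m choose k) / real k ^ n)
       = (1 / fact n) * (\<Sum>P\<in>set_partitions n.
            \<Prod>A\<in>P. fact (card A - 1) * gen_harm (card A) m)"
proof -
  define c where "c = (\<lambda>i::nat. 1 / real i)"
  define h where "h = (\<lambda>k. fact k * complete_hom_fps c m $ k)"
  have lhs: "(\<Sum>k=1..m. (-1) ^ (k - 1) * real (m choose k) / real k ^ n) = complete_hom_fps c m $ n"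
    using alt_binomial_sum_eq_complete_hom[of m n] assms by (simp add: alt_binomial_sum_def c_def)
  have harm: "gen_harm (Suc j) m = (\<Sum>i=1..m. c i ^ Suc j)" for j
    by (simp add: gen_harm_def c_def power_one_over)
  have "(\<Sum>P\<in>set_partitions n. \<Prod>A\<in>P. fact (card A - 1) * gen_harm (card A) m) = h (card {1..n})"
    unfolding set_partitions_def
    by (rule sum_partition_on_prod_eq[where a = "\<lambda>i. fact (i - 1) * gen_harm i m"])
      (simp add: h_def, simp only: h_def harm diff_Suc_1 fact_complete_hom_fps_recurrence, simp)
  then show ?thesis
    using lhs by (simp add: h_def)
qed

end
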